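(* Let $k\ge0$ and let $G=(X\cup Y,E)$ be a connected bipartite graph. Let $D=(<_X,<_Y)$ be a 2-layer $k$-planar drawing of $G$, and let $S\subseteq X$ be a set of $2k+1$ vertices that are consecutive in $<_X$. Let $x$ and $x'$ be the leftmost and rightmost vertex of $S$ in $<_X$. Then for every connected component $C$ of $G[V(G)\setminus N[S]]$, the vertices of $C\cap X$ are either all to the left of $x$ (i.e., $<_X x$) or all to the right of $x'$.
   Context: $N[S]$ denotes $S$ together with all neighbors of vertices of $S$; $G[U]$ is the induced subgraph. A 2-layer drawing of a bipartite graph $G=(X\cup Y,E)$ ($X\cap Y=\emptyset$, $E\subseteq X\times Y$) is a pair $(<_X,<_Y)$ of strict linear orders on $X$ and $Y$. Edges $\{x,y\},\{x',y'\}$ with $x\ne x'\in X$, $y\ne y'\in Y$ cross if $x<_Xx'$ and $y'<_Yy$. The drawing is $k$-planar if every edge crosses at most $k$ edges. *)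

theory Defs
  imports Main
begin

definition bipartite_graph :: "'v set \<Rightarrow> 'v set \<Rightarrow> ('v \<times> 'v) set \<Rightarrow> bool" where
  "bipartite_graph X Y E \<longleftrightarrow> finite X \<and> finite Y \<and> X \<inter> Y = {} \<and> E \<subseteq> X \<times> Y"

definition adj :: "('v \<times> 'v) set \<Rightarrow> 'v \<Rightarrow> 'v \<Rightarrow> bool" where
  "adj E u v \<longleftrightarrow> (u, v) \<in> E \<or> (v, u) \<in> E"

definition induced_adj :: "('v \<times> 'v) set \<Rightarrow> 'v set \<Rightarrow> ('v \<times> 'v) set" where
  "induced_adj E U = {(u, v). u \<in> U \<and> v \<in> U \<and> adj E u v}"

definition closed_nbhd :: "('v \<times> 'v) set \<Rightarrow> 'v set \<Rightarrow> 'v set" where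
  "closed_nbhd E S = S \<union> {v. \<exists>s\<in>S. adj E s v}"

definition connected_graph :: "'v set \<Rightarrow> ('v \<times> 'v) set \<Rightarrow> bool" where
  "connected_graph V E \<longleftrightarrow> (\<forall>u\<in>V. \<forall>v\<in>V. (u, v) \<in> (induced_adj E V)\<^sup>*)"

definition is_component :: "('v \<times> 'v) set \<Rightarrow> 'v set \<Rightarrow> 'v set \<Rightarrow> bool" where
  "is_component E U C \<longleftrightarrow> (\<exists>u\<in>U. C = {v. (u, v) \<in> (induced_adj E U)\<^sup>*})"

text \<open>A 2-layer drawing: strict linear orders LX on X and LY on Y
  ((a,b) \<in> LX means a <_X b).\<close>
definition two_layer_drawing ::
  "'v set \<Rightarrow> 'v set \<Rightarrow> ('v \<times> 'v) set \<Rightarrow> ('v \<times> 'v) set \<Rightarrow> bool" where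
  "two_layer_drawing X Y LX LY \<longleftrightarrow>
     LX \<subseteq> X \<times> X \<and> strict_linear_order_on X LX \<and>
     LY \<subseteq> Y \<times> Y \<and> strict_linear_order_on Y LY"

definition crosses ::
  "('v \<times> 'v) set \<Rightarrow> ('v \<times> 'v) set \<Rightarrow> 'v \<times> 'v \<Rightarrow> 'v \<times> 'v \<Rightarrow> bool" where
  "crosses LX LY e e' \<longleftrightarrow>
     (case e of (x, y) \<Rightarrow> case e' of (x', y') \<Rightarrow>
        x \<noteq> x' \<and> y \<noteq> y' \<and>
        (((x, x') \<in> LX \<and> (y', y) \<in> LY) \<or> ((x', x) \<in> LX \<and> (y, y') \<in> LY)))"

definition k_planar ::
  "nat \<Rightarrow> ('v \<times> 'v) set \<Rightarrow> ('v \<times> 'v) set \<Rightarrow> ('v \<times> 'v) set \<Rightarrow> bool" where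
  "k_planar k E LX LY \<longleftrightarrow> (\<forall>e\<in>E. card {e'\<in>E. crosses LX LY e e'} \<le> k)"

definition consecutive :: "'v set \<Rightarrow> ('v \<times> 'v) set \<Rightarrow> 'v set \<Rightarrow> bool" where
  "consecutive X LX S \<longleftrightarrow> S \<subseteq> X \<and>
     (\<forall>a\<in>S. \<forall>b\<in>S. \<forall>z\<in>X. (a, z) \<in> LX \<and> (z, b) \<in> LX \<longrightarrow> z \<in> S)"

end

theory Submission
  imports Defs
begin

text \<open>If two vertices a <_X x and x' <_X b of a component of G - N[S] had a common
  neighbour y, pick for every s \<in> S an edge (s, f s), which exists as G is connected.
  Since f s \<noteq> y, this edge crosses (a, y) when f s <_Y y and (b, y) when y <_Y f s,
  so k-planarity allows at most 2k vertices in S. Hence X-vertices of a component with a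
  common neighbour lie on the same side of S, and so do all X-vertices of a component,
  by walking along it.\<close>

lemma card_crossing_edges_le:
  assumes "k_planar k E LX LY" "finite E" "e \<in> E" "F \<subseteq> E"
    and "\<forall>f\<in>F. crosses LX LY e f"
  shows "card F \<le> k"
proof -
  have "card F \<le> card {f\<in>E. crosses LX LY e f}"
    using assms(2,4,5) by (intro card_mono) auto
  also have "\<dots> \<le> k"
    using assms(1,3) unfolding k_planar_def by blast
  finally show ?thesis .
qed

lemma card_le_if_common_neighbour_straddles:
  assumes G: "bipartite_graph X Y E" and D: "two_layer_drawing X Y LX LY"
    and kp: "k_planar k E LX LY"
    and has_edge: "\<forall>s\<in>S. \<exists>w. (s, w) \<in> E"
    and ay: "(a, y) \<in> E" and "(b, y) \<in> E" and y_far: "y \<notin> closed_nbhd E S"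
    and a_left: "\<forall>s\<in>S. (a, s) \<in> LX" and b_right: "\<forall>s\<in>S. (s, b) \<in> LX"
  shows "card S \<le> 2 * k"
proof -
  have E_XY: "E \<subseteq> X \<times> Y" and "finite E"
    using G finite_subset[of E "X \<times> Y"] unfolding bipartite_graph_def by auto
  have irr: "(c, c) \<notin> LX" for c
    using D unfolding two_layer_drawing_def strict_linear_order_on_def irrefl_def by blast
  have totY: "total_on Y LY"
    using D unfolding two_layer_drawing_def strict_linear_order_on_def by blast
  obtain f where f: "\<And>s. s \<in> S \<Longrightarrow> (s, f s) \<in> E"
    using has_edge by metis
  have f_ne: "f s \<noteq> y" if "s \<in> S" for s
    using f[OF that] that y_far unfolding closed_nbhd_def adj_def by blast
  define S1 where "S1 = {s\<in>S. (f s, y) \<in> LY}"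
  define S2 where "S2 = {s\<in>S. (y, f s) \<in> LY}"
  have "S = S1 \<union> S2"
  proof -
    have "(f s, y) \<in> LY \<or> (y, f s) \<in> LY" if "s \<in> S" for s
      using totY f[OF that] f_ne[OF that] ay E_XY unfolding total_on_def by blast
    then show ?thesis unfolding S1_def S2_def by blast
  qed
  define edge_of where "edge_of s = (s, f s)" for s
  have card_image_edge_of: "card (edge_of ` T) = card T" for T
    by (rule card_image) (simp add: inj_on_def edge_of_def)
  have "card (edge_of ` S1) \<le> k"
    using \<open>finite E\<close> ay a_left irr f f_ne
    by (intro card_crossing_edges_le[OF kp]) (auto simp: S1_def edge_of_def crosses_def)
  moreover have "card (edge_of ` S2) \<le> k"
    using \<open>finite E\<close> \<open>(b, y) \<in> E\<close> b_right irr f f_ne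
    by (intro card_crossing_edges_le[OF kp]) (auto simp: S2_def edge_of_def crosses_def)
  ultimately show ?thesis
    using card_Un_le[of S1 S2] \<open>S = S1 \<union> S2\<close> by (simp add: card_image_edge_of)
qed

lemma connected_bipartite_ex_edge:
  assumes "bipartite_graph X Y E" "connected_graph (X \<union> Y) E" "s \<in> X" "y \<in> Y"
  shows "\<exists>w. (s, w) \<in> E"
proof -
  have disj: "X \<inter> Y = {}" and E_XY: "E \<subseteq> X \<times> Y"
    using assms(1) unfolding bipartite_graph_def by auto
  have "(s, y) \<in> (induced_adj E (X \<union> Y))\<^sup>*"
    using assms(2-4) unfolding connected_graph_def by blast
  moreover have "s \<noteq> y"
    using assms(3,4) disj by blast
  ultimately obtain w where "adj E s w"
    unfolding induced_adj_def by (metis (no_types, lifting) case_prodD converse_rtranclE mem_Collect_eq)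
  then show ?thesis
    using E_XY assms(3) disj unfolding adj_def by blast
qed

lemma consecutive_outside_left_or_right:
  assumes "consecutive X LX S" "total_on X LX" "x \<in> S" "x' \<in> S" "v \<in> X" "v \<notin> S"
  shows "(v, x) \<in> LX \<or> (x', v) \<in> LX"
  using assms unfolding consecutive_def total_on_def by (metis subsetD)

lemma component_subset: "is_component E U C \<Longrightarrow> C \<subseteq> U"
proof
  fix v
  assume "is_component E U C" "v \<in> C"
  then obtain u where "(u, v) \<in> (induced_adj E U)\<^sup>*" "u \<in> U"
    unfolding is_component_def by blast
  then show "v \<in> U"
    by (induction rule: rtrancl_induct) (auto simp: induced_adj_def)
qed

lemma component_connected:
  assumes "is_component E U C" "c \<in> C" "c' \<in> C"
  shows "(c, c') \<in> (induced_adj E U)\<^sup>*"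
proof -
  have "sym ((induced_adj E U)\<^sup>*)"
    by (rule sym_rtrancl) (auto simp: sym_def induced_adj_def adj_def)
  with assms show ?thesis
    unfolding is_component_def by (blast dest: symD intro: rtrancl_trans)
qed

text \<open>Invariant of the walk: an A-vertex satisfies P, a B-vertex has a predecessor that does.\<close>

lemma bipartite_walk_preserves:
  assumes R: "R \<subseteq> A \<times> B \<union> B \<times> A" and disj: "A \<inter> B = {}"
    and two_steps: "\<And>a b a'. (a, b) \<in> R \<Longrightarrow> (b, a') \<in> R \<Longrightarrow> P a \<Longrightarrow> P a'"
    and walk: "(a, a') \<in> R\<^sup>*" and "a \<in> A" "a' \<in> A" "P a"
  shows "P a'"
proof -
  have "v \<in> A \<and> P v \<or> v \<in> B \<and> (\<exists>p. (p, v) \<in> R \<and> P p)" if "(a, v) \<in> R\<^sup>*" for v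
    using that
  proof (induction rule: rtrancl_induct)
    case base
    then show ?case using \<open>a \<in> A\<close> \<open>P a\<close> by blast
  next
    case (step q r)
    then show ?case using R disj two_steps by blast
  qed
  then show ?thesis
    using walk \<open>a' \<in> A\<close> disj by blast
qed

locale k_planar_block =
  fixes X Y :: "'v set" and E LX LY :: "('v \<times> 'v) set" and k :: nat
    and S :: "'v set" and x x' :: 'v
  assumes bipartite: "bipartite_graph X Y E"
    and connected: "connected_graph (X \<union> Y) E"
    and drawing: "two_layer_drawing X Y LX LY"
    and planar: "k_planar k E LX LY"
    and consecutive: "consecutive X LX S"
    and card_S: "card S = 2 * k + 1"
    and x_in: "x \<in> S" and x_least: "\<forall>s\<in>S. s \<noteq> x \<longrightarrow> (x, s) \<in> LX"
    and x'_in: "x' \<in> S" and x'_greatest: "\<forall>s\<in>S. s \<noteq> x' \<longrightarrow> (s, x') \<in> LX"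
begin

abbreviation outside :: "'v set" where
  "outside \<equiv> (X \<union> Y) - closed_nbhd E S"

lemma E_subset: "E \<subseteq> X \<times> Y" and X_Y_disjoint: "X \<inter> Y = {}" and S_subset: "S \<subseteq> X"
  using bipartite consecutive unfolding bipartite_graph_def consecutive_def by auto

lemma left_of_block: "(c, x) \<in> LX \<Longrightarrow> s \<in> S \<Longrightarrow> (c, s) \<in> LX"
  using drawing x_least unfolding two_layer_drawing_def strict_linear_order_on_def
  by (metis transD)

lemma right_of_block: "(x', c) \<in> LX \<Longrightarrow> s \<in> S \<Longrightarrow> (s, c) \<in> LX"
  using drawing x'_greatest unfolding two_layer_drawing_def strict_linear_order_on_def
  by (metis transD)

lemma outside_left_or_right: "c \<in> outside \<inter> X \<Longrightarrow> (c, x) \<in> LX \<or> (x', c) \<in> LX"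
  using consecutive_outside_left_or_right[OF consecutive _ x_in x'_in] drawing
  unfolding two_layer_drawing_def strict_linear_order_on_def closed_nbhd_def by blast

lemma induced_adj_bipartite: "induced_adj E U \<subseteq> X \<times> Y \<union> Y \<times> X"
  using E_subset unfolding induced_adj_def adj_def by blast

lemma common_neighbour_same_side:
  assumes "(c, q) \<in> induced_adj E outside" "(q, c') \<in> induced_adj E outside" "(c, x) \<in> LX"
  shows "(c', x) \<in> LX"
proof (rule ccontr)
  assume "(c', x) \<notin> LX"
  have "c' \<in> outside \<inter> X" "(c, q) \<in> E" "(c', q) \<in> E" "q \<in> Y" "q \<notin> closed_nbhd E S"
    using assms \<open>(c', x) \<notin> LX\<close> E_subset X_Y_disjoint drawing
    unfolding induced_adj_def adj_def two_layer_drawing_def by auto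
  with outside_left_or_right \<open>(c', x) \<notin> LX\<close> have "(x', c') \<in> LX" by blast
  have "\<forall>s\<in>S. \<exists>w. (s, w) \<in> E"
    using connected_bipartite_ex_edge[OF bipartite connected] S_subset \<open>q \<in> Y\<close> by blast
  then have "card S \<le> 2 * k"
    using card_le_if_common_neighbour_straddles[OF bipartite drawing planar]
      \<open>(c, q) \<in> E\<close> \<open>(c', q) \<in> E\<close> \<open>q \<notin> closed_nbhd E S\<close>
      left_of_block[OF assms(3)] right_of_block[OF \<open>(x', c') \<in> LX\<close>] by blast
  with card_S show False by simp
qed

lemma component_one_sided:
  assumes "is_component E outside C"
  shows "(\<forall>c\<in>C \<inter> X. (c, x) \<in> LX) \<or> (\<forall>c\<in>C \<inter> X. (x', c) \<in> LX)"
proof (rule ccontr)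
  assume "\<not> ?thesis"
  then obtain c1 c2 where c1: "c1 \<in> C \<inter> X" "(c1, x) \<notin> LX"
    and c2: "c2 \<in> C \<inter> X" "(x', c2) \<notin> LX" by blast
  have "C \<subseteq> outside"
    using component_subset[OF assms] .
  have walk: "(c2, c1) \<in> (induced_adj E outside)\<^sup>*"
    using component_connected[OF assms] c1 c2 by blast
  have "(c2, x) \<in> LX"
    using outside_left_or_right c2 \<open>C \<subseteq> outside\<close> by blast
  moreover have "c2 \<in> X" "c1 \<in> X"
    using c1 c2 by blast+
  ultimately have "(c1, x) \<in> LX"
    by (intro bipartite_walk_preserves[where P = "\<lambda>c. (c, x) \<in> LX",
          OF induced_adj_bipartite X_Y_disjoint common_neighbour_same_side walk])
  with c1 show False by blast
qed

end

theorem lemma4p1: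
  fixes X Y :: "'v set" and E LX LY :: "('v \<times> 'v) set" and k :: nat
    and S :: "'v set" and x x' :: 'v
  assumes "bipartite_graph X Y E"
    and "connected_graph (X \<union> Y) E"
    and "two_layer_drawing X Y LX LY"
    and "k_planar k E LX LY"
    and "consecutive X LX S"
    and "card S = 2 * k + 1"
    and "x \<in> S" and "\<forall>s\<in>S. s \<noteq> x \<longrightarrow> (x, s) \<in> LX"
    and "x' \<in> S" and "\<forall>s\<in>S. s \<noteq> x' \<longrightarrow> (s, x') \<in> LX"
    and "is_component E ((X \<union> Y) - closed_nbhd E S) C"
  shows "(\<forall>c\<in>C \<inter> X. (c, x) \<in> LX) \<or> (\<forall>c\<in>C \<inter> X. (x', c) \<in> LX)"
proof -
  interpret k_planar_block X Y E LX LY k S x x'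
    using assms(1-10) by unfold_locales
  show ?thesis
    using component_one_sided[OF assms(11)] .
qed

end
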